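(* For every integer $n\ge 0$, $$\Phi^{(2)}[a; b, b'; cq^{-n}, c'; x, y] = \frac{1}{(q/c; q)_n} \sum_{k=0}^n \begin{bmatrix} n \\ k \end{bmatrix} (-c)^{k-n} q^{\binom{n+1-k}{2}} \Phi^{(2)}[a; b, b'; c, c'; xq^k, y]$$ and $$\Phi^{(2)}[a; b, b'; cq^n, c'; x, y] = \sum_{k=0}^n \begin{bmatrix} n \\ k \end{bmatrix} c^k q^{2\binom{k}{2}} (cq^k; q)_{n-k}\, \Phi^{(2)}[a; b, b'; cq^k, c'; xq^k, y].$$
   Context: Let $q$ be a complex number with $0<|q|<1$. For complex $z$ and integer $m\ge 0$, $(z;q)_m=\prod_{j=0}^{m-1}(1-zq^j)$, with $(z;q)_0=1$. For integers $0\le k\le n$, $\begin{bmatrix} n \\ k \end{bmatrix}=\frac{(q;q)_n}{(q;q)_k(q;q)_{n-k}}$ is the $q$-binomial coefficient, and $\binom{j}{2}=j(j-1)/2$. The $q$-Appell function $\Phi^{(2)}$ is $$\Phi^{(2)}[a; b, b'; c, c'; x, y] = \sum_{m, n \geq 0} \frac{(a; q)_{m+n} (b; q)_m (b'; q)_n}{(q; q)_m (q; q)_n (c; q)_m (c'; q)_n} x^m y^n.$$ Identities are understood as identities of power series in $x,y$ (formal, or convergent for small $|x|,|y|$), with complex parameters chosen so that no denominator occurring vanishes. *)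

theory Defs
  imports "HOL-Analysis.Analysis"
begin

definition qpoch :: "complex \<Rightarrow> complex \<Rightarrow> nat \<Rightarrow> complex" where
  "qpoch z q m = (\<Prod>j<m. 1 - z * q ^ j)"

definition qbinom :: "complex \<Rightarrow> nat \<Rightarrow> nat \<Rightarrow> complex" where
  "qbinom q n k = qpoch q q n / (qpoch q q k * qpoch q q (n - k))"

definition Phi2 :: "complex \<Rightarrow> complex \<Rightarrow> complex \<Rightarrow> complex \<Rightarrow> complex \<Rightarrow> complex
    \<Rightarrow> complex \<Rightarrow> complex \<Rightarrow> complex" where
  "Phi2 q a b b' c c' x y =
     (\<Sum>\<^sub>\<infinity>(m, n)\<in>(UNIV :: (nat \<times> nat) set).
        qpoch a q (m + n) * qpoch b q m * qpoch b' q n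
        / (qpoch q q m * qpoch q q n * qpoch c q m * qpoch c' q n) * x ^ m * y ^ n)"

end

theory Submission
  imports Defs
begin

text \<open>Both identities hold coefficientwise. In the \<open>(m, l)\<close> term of \<open>Phi2\<close> the parameter
  \<open>c\<close> enters only through the factor \<open>1/(c;q)_m\<close>, and \<open>x \<mapsto> x q^k\<close> multiplies the term by
  \<open>q^(k m)\<close>. As all series involved converge absolutely, it suffices to expand \<open>1/(c q^-n;q)_m\<close>
  and \<open>1/(c q^n;q)_m\<close> as linear combinations of the \<open>q^(k m)/(c;q)_m\<close>, resp. of the
  \<open>q^(k m)/(c q^k;q)_m\<close>, for \<open>k \<le> n\<close>. The first expansion is the q-binomial theorem for
  \<open>(c q^(m-n);q)_n\<close> combined with the reflection formula for \<open>(c q^-n;q)_n\<close>; the second is the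
  identity \<open>\<Sum>\<^sub>k [n,k] z^k q^(k(k-1)) (z q^k;q)_(n-k) = 1\<close> at \<open>z = c q^m\<close>.\<close>

section \<open>q-Pochhammer symbols\<close>

lemma qpoch_0 [simp]: "qpoch z q 0 = 1"
  by (simp add: qpoch_def)

lemma qpoch_Suc: "qpoch z q (Suc n) = qpoch z q n * (1 - z * q ^ n)"
  by (simp add: qpoch_def)

lemma qpoch_add: "qpoch z q (n + m) = qpoch z q n * qpoch (z * q ^ n) q m"
  by (induction m) (simp_all add: qpoch_Suc power_add mult.assoc)

lemma qpoch_Suc_shift: "qpoch z q (Suc n) = (1 - z) * qpoch (z * q) q n"
  using qpoch_add[of z q 1 n] by (simp add: qpoch_Suc)

lemma qpoch_q_q_nonzero:
  assumes "norm q < 1"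
  shows "qpoch q q m \<noteq> 0"
proof -
  have "norm (q * q ^ j) < 1" for j
  proof -
    have "norm (q * q ^ j) = norm q * norm q ^ j"
      by (simp add: norm_mult norm_power)
    also have "\<dots> \<le> norm q"
      using assms by (simp add: mult_left_le power_le_one)
    finally show ?thesis
      using assms by simp
  qed
  then have "1 - q * q ^ j \<noteq> 0" for j
    by (metis norm_one order.irrefl right_minus_eq)
  then show ?thesis
    by (simp add: qpoch_def)
qed

lemma choose_two_Suc: "Suc k choose 2 = k + (k choose 2)"
  by (simp add: numeral_2_eq_2)

lemma choose_two_Suc_add: "k \<le> n \<Longrightarrow> (Suc n choose 2) + (k choose 2) = n * k + ((Suc n - k) choose 2)"
proof -
  have "(Suc (k + t) choose 2) + (k choose 2) = (k + t) * k + (Suc t choose 2)" for t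
    by (induction k) (simp_all add: choose_two_Suc algebra_simps)
  then show "k \<le> n \<Longrightarrow> ?thesis"
    by (metis Suc_diff_le add_diff_inverse_nat not_less)
qed

lemma qpoch_reflect:
  assumes "q \<noteq> 0" and "c \<noteq> 0"
  shows "q ^ (Suc n choose 2) * qpoch (c / q ^ n) q n = (- c) ^ n * qpoch (q / c) q n"
proof (induction n)
  case 0
  then show ?case by (simp add: binomial_eq_0)
next
  case (Suc n)
  have "c / q ^ Suc n * q = c / q ^ n"
    using assms by (simp add: field_simps)
  then have "q ^ (Suc (Suc n) choose 2) * qpoch (c / q ^ Suc n) q (Suc n)
      = (q ^ Suc n - c) * (q ^ (Suc n choose 2) * qpoch (c / q ^ n) q n)"
    unfolding qpoch_Suc_shift choose_two_Suc power_add using assms by (simp add: field_simps)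
  also have "\<dots> = (- c) ^ Suc n * qpoch (q / c) q (Suc n)"
    unfolding Suc.IH qpoch_Suc using assms by (simp add: field_simps)
  finally show ?case .
qed

lemma qpoch_segment_swap:
  assumes "k \<le> n"
  shows "qpoch (c * q ^ k) q (n - k) * qpoch (c * q ^ n) q m
       = qpoch (c * q ^ k) q m * qpoch (c * q ^ m * q ^ k) q (n - k)"
proof -
  have "c * q ^ k * q ^ (n - k) = c * q ^ n"
    using assms by (simp add: mult.assoc power_add[symmetric])
  then have "qpoch (c * q ^ k) q (n - k) * qpoch (c * q ^ n) q m = qpoch (c * q ^ k) q (n - k + m)"
    by (simp only: qpoch_add)
  also have "\<dots> = qpoch (c * q ^ k) q m * qpoch (c * q ^ m * q ^ k) q (n - k)"
    by (subst add.commute) (simp add: qpoch_add mult_ac)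
  finally show ?thesis .
qed

section \<open>Gaussian binomial coefficients\<close>

text \<open>The q-Pascal recursion gives a division-free form of \<^const>\<open>qbinom\<close> that vanishes
  for \<open>k > n\<close>, where \<^const>\<open>qbinom\<close> has junk values; the two agree for \<open>k \<le> n\<close> once
  \<open>|q| < 1\<close> (\<open>qbinom_eq_gauss_binom\<close>).\<close>

fun gauss_binom :: "complex \<Rightarrow> nat \<Rightarrow> nat \<Rightarrow> complex" where
  "gauss_binom q 0 k = (if k = 0 then 1 else 0)"
| "gauss_binom q (Suc n) 0 = 1"
| "gauss_binom q (Suc n) (Suc k) = gauss_binom q n (Suc k) + q ^ (n - k) * gauss_binom q n k"

lemma gauss_binom_0_right [simp]: "gauss_binom q n 0 = 1"
  by (cases n) auto

lemma gauss_binom_eq_0: "n < k \<Longrightarrow> gauss_binom q n k = 0"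
  by (induction q n k rule: gauss_binom.induct) auto

lemma gauss_binom_mult_qpoch:
  "k \<le> n \<Longrightarrow> gauss_binom q n k * (qpoch q q k * qpoch q q (n - k)) = qpoch q q n"
proof (induction n arbitrary: k)
  case 0
  then show ?case by simp
next
  case (Suc n k)
  show ?case
  proof (cases k)
    case 0
    then show ?thesis by simp
  next
    case (Suc j)
    with Suc.prems have "j \<le> n" by simp
    have left: "gauss_binom q n (Suc j) * (qpoch q q (Suc j) * qpoch q q (n - j))
        = qpoch q q n * (1 - q ^ (n - j))"
    proof (cases "j = n")
      case True
      then show ?thesis by (simp add: gauss_binom_eq_0)
    next
      case False
      with \<open>j \<le> n\<close> have "Suc j \<le> n" and "qpoch q q (n - j) = qpoch q q (n - Suc j) * (1 - q ^ (n - j))"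
        by (simp, metis Suc_diff_Suc le_neq_implies_less qpoch_Suc power_Suc)
      then show ?thesis
        using Suc.IH[of "Suc j"] by (metis mult.assoc mult.left_commute)
    qed
    have right: "gauss_binom q n j * (qpoch q q j * qpoch q q (n - j)) = qpoch q q n"
      using Suc.IH \<open>j \<le> n\<close> by simp
    have "gauss_binom q (Suc n) k * (qpoch q q k * qpoch q q (Suc n - k))
        = gauss_binom q n (Suc j) * (qpoch q q (Suc j) * qpoch q q (n - j))
          + q ^ (n - j) * (gauss_binom q n j * (qpoch q q j * qpoch q q (n - j))) * (1 - q ^ Suc j)"
      using \<open>k = Suc j\<close> by (simp add: qpoch_Suc algebra_simps)
    also have "\<dots> = qpoch q q n * (1 - q ^ (n - j) * q ^ Suc j)"
      unfolding left right by (simp add: algebra_simps)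
    also have "q ^ (n - j) * q ^ Suc j = q ^ Suc n"
      using \<open>j \<le> n\<close> by (simp add: power_add[symmetric])
    finally show ?thesis
      by (simp add: qpoch_Suc)
  qed
qed

lemma qbinom_eq_gauss_binom:
  assumes "norm q < 1" and "k \<le> n"
  shows "qbinom q n k = gauss_binom q n k"
  using gauss_binom_mult_qpoch[OF assms(2)] qpoch_q_q_nonzero[OF assms(1)]
  by (simp add: qbinom_def field_simps)

lemma sum_gauss_binom_Suc:
  "(\<Sum>k\<le>Suc n. gauss_binom q (Suc n) k * f k)
     = (\<Sum>k\<le>n. gauss_binom q n k * f k) + (\<Sum>k\<le>n. q ^ (n - k) * gauss_binom q n k * f (Suc k))"
proof -
  have "(\<Sum>k\<le>Suc n. gauss_binom q (Suc n) k * f k)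
      = f 0 + (\<Sum>k\<le>n. gauss_binom q n (Suc k) * f (Suc k)) + (\<Sum>k\<le>n. q ^ (n - k) * gauss_binom q n k * f (Suc k))"
    by (simp add: sum.atMost_Suc_shift sum.distrib algebra_simps del: sum.atMost_Suc)
  also have "f 0 + (\<Sum>k\<le>n. gauss_binom q n (Suc k) * f (Suc k)) = (\<Sum>k\<le>Suc n. gauss_binom q n k * f k)"
    by (simp add: sum.atMost_Suc_shift del: sum.atMost_Suc)
  also have "\<dots> = (\<Sum>k\<le>n. gauss_binom q n k * f k)"
    by (simp add: gauss_binom_eq_0)
  finally show ?thesis .
qed

theorem q_binomial_theorem:
  "qpoch z q n = (\<Sum>k\<le>n. gauss_binom q n k * (- z) ^ k * q ^ (k choose 2))"
proof (induction n)
  case 0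
  then show ?case by (simp add: binomial_eq_0)
next
  case (Suc n)
  have "(\<Sum>k\<le>n. q ^ (n - k) * gauss_binom q n k * ((- z) ^ Suc k * q ^ (Suc k choose 2)))
      = - z * q ^ n * (\<Sum>k\<le>n. gauss_binom q n k * (- z) ^ k * q ^ (k choose 2))"
    unfolding sum_distrib_left
  proof (rule sum.cong)
    fix k
    assume "k \<in> {..n}"
    then have "q ^ (n - k) * q ^ k = q ^ n"
      by (simp add: power_add[symmetric])
    then show "q ^ (n - k) * gauss_binom q n k * ((- z) ^ Suc k * q ^ (Suc k choose 2))
        = - z * q ^ n * (gauss_binom q n k * (- z) ^ k * q ^ (k choose 2))"
      by (simp add: choose_two_Suc power_add)
  qed simp
  then show ?case
    using sum_gauss_binom_Suc[of q n "\<lambda>k. (- z) ^ k * q ^ (k choose 2)"]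
    by (simp add: Suc.IH mult.assoc qpoch_Suc algebra_simps)
qed

lemma sum_gauss_binom_qpoch_eq_1:
  "(\<Sum>k\<le>n. gauss_binom q n k * (z ^ k * q ^ (2 * (k choose 2)) * qpoch (z * q ^ k) q (n - k))) = 1"
proof (induction n arbitrary: z)
  case 0
  then show ?case by (simp add: binomial_eq_0)
next
  case (Suc n z)
  let ?f = "\<lambda>k. z ^ k * q ^ (2 * (k choose 2)) * qpoch (z * q ^ k) q (Suc n - k)"
  have stay: "(\<Sum>k\<le>n. gauss_binom q n k * ?f k) = (1 - z * q ^ n) *
      (\<Sum>k\<le>n. gauss_binom q n k * (z ^ k * q ^ (2 * (k choose 2)) * qpoch (z * q ^ k) q (n - k)))"
    unfolding sum_distrib_left
  proof (rule sum.cong)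
    fix k
    assume "k \<in> {..n}"
    then have "Suc n - k = Suc (n - k)" and "q ^ k * q ^ (n - k) = q ^ n"
      by (simp_all add: power_add[symmetric])
    then show "gauss_binom q n k * ?f k = (1 - z * q ^ n) *
        (gauss_binom q n k * (z ^ k * q ^ (2 * (k choose 2)) * qpoch (z * q ^ k) q (n - k)))"
      by (simp add: qpoch_Suc mult_ac)
  qed simp
  have shift: "(\<Sum>k\<le>n. q ^ (n - k) * gauss_binom q n k * ?f (Suc k)) = z * q ^ n *
      (\<Sum>k\<le>n. gauss_binom q n k * ((z * q) ^ k * q ^ (2 * (k choose 2)) * qpoch (z * q * q ^ k) q (n - k)))"
    unfolding sum_distrib_left
  proof (rule sum.cong)
    fix k
    assume "k \<in> {..n}"
    then have "q ^ (n - k) * q ^ (k * 2) = q ^ k * q ^ n"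
      by (simp add: power_add[symmetric])
    then show "q ^ (n - k) * gauss_binom q n k * ?f (Suc k) = z * q ^ n *
        (gauss_binom q n k * ((z * q) ^ k * q ^ (2 * (k choose 2)) * qpoch (z * q * q ^ k) q (n - k)))"
      by (simp add: choose_two_Suc power_add power_mult_distrib algebra_simps)
  qed simp
  show ?case
    unfolding sum_gauss_binom_Suc[of q n ?f] stay shift Suc.IH by (simp add: algebra_simps)
qed

section \<open>The coefficient identities\<close>

lemma qpoch_divide_power_expansion:
  assumes "q \<noteq> 0" and "c \<noteq> 0"
  shows "(- c) ^ n * qpoch (q / c) q n * qpoch c q m
    = qpoch (c / q ^ n) q m * (\<Sum>k\<le>n. gauss_binom q n k * (- c) ^ k * q ^ ((Suc n - k) choose 2) * (q ^ k) ^ m)"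
proof -
  define d where "d = c / q ^ n"
  have "d * q ^ n = c"
    using assms(1) by (simp add: d_def)
  then have "qpoch d q n * qpoch c q m = qpoch d q m * qpoch (d * q ^ m) q n"
    using qpoch_add[of d q n m] qpoch_add[of d q m n] by (simp add: add.commute)
  moreover have "q ^ (Suc n choose 2) * qpoch (d * q ^ m) q n
      = (\<Sum>k\<le>n. gauss_binom q n k * (- c) ^ k * q ^ ((Suc n - k) choose 2) * (q ^ k) ^ m)"
    unfolding q_binomial_theorem sum_distrib_left
  proof (rule sum.cong)
    fix k
    assume "k \<in> {..n}"
    then have exponents: "q ^ (Suc n choose 2) * q ^ (k choose 2) = q ^ (n * k) * q ^ ((Suc n - k) choose 2)"
      by (simp add: choose_two_Suc_add power_add[symmetric])
    have powers: "(- (d * q ^ m)) ^ k * q ^ (n * k) = (- c) ^ k * (q ^ k) ^ m"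
    proof -
      have "(- (d * q ^ m)) ^ k * q ^ (n * k) = (- (d * q ^ m) * q ^ n) ^ k"
        by (simp only: power_mult power_mult_distrib)
      also have "\<dots> = (- c * q ^ m) ^ k"
        unfolding \<open>d * q ^ n = c\<close>[symmetric] by (simp add: mult_ac)
      also have "\<dots> = (- c) ^ k * (q ^ k) ^ m"
        by (simp only: power_mult_distrib) (simp add: power_mult[symmetric] mult.commute)
      finally show ?thesis .
    qed
    have "q ^ (Suc n choose 2) * (gauss_binom q n k * (- (d * q ^ m)) ^ k * q ^ (k choose 2))
        = gauss_binom q n k * (- (d * q ^ m)) ^ k * (q ^ (Suc n choose 2) * q ^ (k choose 2))"
      by (simp only: mult_ac)
    also have "\<dots> = gauss_binom q n k * ((- (d * q ^ m)) ^ k * q ^ (n * k)) * q ^ ((Suc n - k) choose 2)"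
      unfolding exponents by (simp only: mult_ac)
    also have "\<dots> = gauss_binom q n k * (- c) ^ k * q ^ ((Suc n - k) choose 2) * (q ^ k) ^ m"
      unfolding powers by (simp only: mult_ac)
    finally show "q ^ (Suc n choose 2) * (gauss_binom q n k * (- (d * q ^ m)) ^ k * q ^ (k choose 2))
        = gauss_binom q n k * (- c) ^ k * q ^ ((Suc n - k) choose 2) * (q ^ k) ^ m" .
  qed simp
  ultimately show ?thesis
    using qpoch_reflect[OF assms, of n] unfolding d_def[symmetric] by (metis mult.assoc mult.commute)
qed

lemma inverse_qpoch_divide_power_expansion:
  assumes "q \<noteq> 0" and "c \<noteq> 0" and "qpoch c q m \<noteq> 0" and "qpoch (q / c) q n \<noteq> 0"
  shows "1 / qpoch (c / q ^ n) q m = (\<Sum>k=0..n. gauss_binom q n k * (- c) powi (int k - int n)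
           * q ^ ((n + 1 - k) choose 2) / qpoch (q / c) q n * (q ^ k) ^ m / qpoch c q m)"
proof -
  define S where "S = (\<Sum>k\<le>n. gauss_binom q n k * (- c) ^ k * q ^ ((Suc n - k) choose 2) * (q ^ k) ^ m)"
  have key: "(- c) ^ n * qpoch (q / c) q n * qpoch c q m = qpoch (c / q ^ n) q m * S"
    unfolding S_def by (rule qpoch_divide_power_expansion[OF assms(1,2)])
  then have "S \<noteq> 0"
    using assms(2-4) by auto
  have "(\<Sum>k=0..n. gauss_binom q n k * (- c) powi (int k - int n) * q ^ ((n + 1 - k) choose 2)
           / qpoch (q / c) q n * (q ^ k) ^ m / qpoch c q m)
      = S / ((- c) ^ n * qpoch (q / c) q n * qpoch c q m)"
    unfolding S_def sum_divide_distrib atLeast0AtMost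
  proof (rule sum.cong)
    fix k
    have "(- c) powi (int k - int n) = (- c) ^ k / (- c) ^ n"
      using assms(2) by (simp add: power_int_diff)
    then show "gauss_binom q n k * (- c) powi (int k - int n) * q ^ ((n + 1 - k) choose 2)
          / qpoch (q / c) q n * (q ^ k) ^ m / qpoch c q m
        = gauss_binom q n k * (- c) ^ k * q ^ ((Suc n - k) choose 2) * (q ^ k) ^ m
          / ((- c) ^ n * qpoch (q / c) q n * qpoch c q m)"
      by (simp add: divide_inverse inverse_mult_distrib mult_ac)
  qed simp
  also have "\<dots> = 1 / qpoch (c / q ^ n) q m"
    unfolding key using \<open>S \<noteq> 0\<close> by simp
  finally show ?thesis
    by (rule sym)
qed

lemma inverse_qpoch_mult_power_expansion:
  assumes "\<And>k. k \<le> n \<Longrightarrow> qpoch (c * q ^ k) q m \<noteq> 0"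
  shows "1 / qpoch (c * q ^ n) q m = (\<Sum>k=0..n. gauss_binom q n k * c ^ k * q ^ (2 * (k choose 2))
           * qpoch (c * q ^ k) q (n - k) * (q ^ k) ^ m / qpoch (c * q ^ k) q m)"
proof -
  have "(\<Sum>k=0..n. gauss_binom q n k * c ^ k * q ^ (2 * (k choose 2))
           * qpoch (c * q ^ k) q (n - k) * (q ^ k) ^ m / qpoch (c * q ^ k) q m) * qpoch (c * q ^ n) q m
      = (\<Sum>k\<le>n. gauss_binom q n k * ((c * q ^ m) ^ k * q ^ (2 * (k choose 2))
           * qpoch (c * q ^ m * q ^ k) q (n - k)))"
    unfolding sum_distrib_right atLeast0AtMost
  proof (rule sum.cong)
    fix k
    assume "k \<in> {..n}"
    then have "k \<le> n" by simp
    have power: "(c * q ^ m) ^ k = c ^ k * (q ^ k) ^ m"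
      by (simp only: power_mult_distrib) (simp add: power_mult[symmetric] mult.commute)
    have "gauss_binom q n k * c ^ k * q ^ (2 * (k choose 2)) * qpoch (c * q ^ k) q (n - k)
          * (q ^ k) ^ m / qpoch (c * q ^ k) q m * qpoch (c * q ^ n) q m
        = gauss_binom q n k * c ^ k * q ^ (2 * (k choose 2)) * (q ^ k) ^ m
          * (qpoch (c * q ^ k) q (n - k) * qpoch (c * q ^ n) q m / qpoch (c * q ^ k) q m)"
      by (simp add: divide_inverse mult_ac)
    also have "qpoch (c * q ^ k) q (n - k) * qpoch (c * q ^ n) q m / qpoch (c * q ^ k) q m
        = qpoch (c * q ^ m * q ^ k) q (n - k)"
      using qpoch_segment_swap[OF \<open>k \<le> n\<close>] assms[OF \<open>k \<le> n\<close>] by simp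
    also have "gauss_binom q n k * c ^ k * q ^ (2 * (k choose 2)) * (q ^ k) ^ m
          * qpoch (c * q ^ m * q ^ k) q (n - k)
        = gauss_binom q n k * ((c * q ^ m) ^ k * q ^ (2 * (k choose 2)) * qpoch (c * q ^ m * q ^ k) q (n - k))"
      unfolding power by (simp add: mult_ac)
    finally show "gauss_binom q n k * c ^ k * q ^ (2 * (k choose 2)) * qpoch (c * q ^ k) q (n - k)
          * (q ^ k) ^ m / qpoch (c * q ^ k) q m * qpoch (c * q ^ n) q m
        = gauss_binom q n k * ((c * q ^ m) ^ k * q ^ (2 * (k choose 2)) * qpoch (c * q ^ m * q ^ k) q (n - k))" .
  qed simp
  also have "\<dots> = 1"
    by (rule sum_gauss_binom_qpoch_eq_1)
  finally show ?thesis
    using assms[of n] by (simp add: divide_eq_eq)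
qed

section \<open>Convergence of the double series\<close>

lemma has_sum_sum:
  fixes f :: "'i \<Rightarrow> 'a \<Rightarrow> 'b :: topological_comm_monoid_add"
  assumes "finite I" and "\<And>i. i \<in> I \<Longrightarrow> (f i has_sum s i) A"
  shows "((\<lambda>x. \<Sum>i\<in>I. f i x) has_sum (\<Sum>i\<in>I. s i)) A"
  using assms by (induction I rule: finite_induct) (simp_all add: has_sum_add)

lemma convergent_prod_qpoch_factors:
  fixes z q :: complex
  assumes "norm q < 1"
  shows "convergent_prod (\<lambda>j. 1 - z * q ^ j)"
proof -
  have "summable (\<lambda>j. norm ((1 - z * q ^ j) - 1))"
    using assms by (simp add: norm_mult norm_power summable_mult summable_geometric)
  then show ?thesis
    by (intro abs_convergent_prod_imp_convergent_prod summable_imp_abs_convergent_prod)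
qed

lemma qpoch_LIMSEQ:
  assumes "norm q < 1"
  shows "(\<lambda>m. qpoch z q m) \<longlonglongrightarrow> (\<Prod>j. 1 - z * q ^ j)"
proof -
  have "(\<lambda>m. qpoch z q (Suc m)) \<longlonglongrightarrow> (\<Prod>j. 1 - z * q ^ j)"
    using convergent_prod_LIMSEQ[OF convergent_prod_qpoch_factors[OF assms]]
    by (simp add: qpoch_def lessThan_Suc_atMost)
  then show ?thesis
    by (rule LIMSEQ_imp_Suc)
qed

lemma Bseq_qpoch: "norm q < 1 \<Longrightarrow> Bseq (\<lambda>m. qpoch z q m)"
  using qpoch_LIMSEQ convergent_imp_Bseq convergentI by blast

lemma Bseq_inverse_qpoch:
  assumes "norm q < 1" and "\<And>m. qpoch z q m \<noteq> 0"
  shows "Bseq (\<lambda>m. inverse (qpoch z q m))"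
proof -
  have "1 - z * q ^ j \<noteq> 0" for j
    using assms(2)[of "Suc j"] by (simp add: qpoch_def)
  then have "(\<Prod>j. 1 - z * q ^ j) \<noteq> 0"
    using prodinf_nonzero convergent_prod_qpoch_factors[OF assms(1)] by blast
  then show ?thesis
    using tendsto_inverse[OF qpoch_LIMSEQ[OF assms(1)]] convergent_imp_Bseq convergentI by blast
qed

lemma summable_on_power_pairs:
  fixes r s :: real
  assumes "0 \<le> r" "r < 1" "0 \<le> s" "s < 1"
  shows "(\<lambda>(m, l). r ^ m * s ^ l) summable_on (UNIV :: (nat \<times> nat) set)"
proof -
  have "(\<lambda>l. r ^ m * s ^ l) sums (r ^ m * (1 / (1 - s)))" for m
    using assms by (intro sums_mult geometric_sums) simp
  then have "((\<lambda>l. r ^ m * s ^ l) has_sum r ^ m * (1 / (1 - s))) UNIV" for m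
    using assms by (intro sums_nonneg_imp_has_sum) simp_all
  moreover have "(\<lambda>m. r ^ m * (1 / (1 - s))) summable_on UNIV"
    using assms by (subst summable_on_UNIV_nonneg_real_iff) (auto intro!: summable_mult2 summable_geometric)
  ultimately show ?thesis
    using assms summable_on_SigmaI[where A = UNIV and B = "\<lambda>_. UNIV" and f = "\<lambda>(m, l). r ^ m * s ^ l"
        and g = "\<lambda>m. r ^ m / (1 - s)"]
    by auto
qed

definition Phi2_term :: "complex \<Rightarrow> complex \<Rightarrow> complex \<Rightarrow> complex \<Rightarrow> complex \<Rightarrow> complex
    \<Rightarrow> complex \<Rightarrow> complex \<Rightarrow> nat \<times> nat \<Rightarrow> complex" where
  "Phi2_term q a b b' c c' x y = (\<lambda>(m, n). qpoch a q (m + n) * qpoch b q m * qpoch b' q n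
     / (qpoch q q m * qpoch q q n * qpoch c q m * qpoch c' q n) * x ^ m * y ^ n)"

lemma Phi2_eq_infsum: "Phi2 q a b b' c c' x y = infsum (Phi2_term q a b b' c c' x y) UNIV"
  by (simp add: Phi2_def Phi2_term_def)

lemma Phi2_term_summable:
  assumes "norm q < 1" and "norm x < 1" and "norm y < 1"
    and "\<And>m. qpoch c q m \<noteq> 0" and "\<And>m. qpoch c' q m \<noteq> 0"
  shows "Phi2_term q a b b' c c' x y summable_on UNIV"
proof -
  obtain A where A: "\<And>m. norm (qpoch a q m) \<le> A"
    using Bseq_qpoch[OF assms(1), of a] by (meson BseqE)
  obtain B where B: "\<And>m. norm (qpoch b q m) \<le> B"
    using Bseq_qpoch[OF assms(1), of b] by (meson BseqE)
  obtain B' where B': "\<And>m. norm (qpoch b' q m) \<le> B'"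
    using Bseq_qpoch[OF assms(1), of b'] by (meson BseqE)
  obtain Q where Q: "\<And>m. norm (inverse (qpoch q q m)) \<le> Q"
    using Bseq_inverse_qpoch[OF assms(1) qpoch_q_q_nonzero[OF assms(1)]] by (meson BseqE)
  obtain C where C: "\<And>m. norm (inverse (qpoch c q m)) \<le> C"
    using Bseq_inverse_qpoch[OF assms(1,4)] by (meson BseqE)
  obtain C' where C': "\<And>m. norm (inverse (qpoch c' q m)) \<le> C'"
    using Bseq_inverse_qpoch[OF assms(1,5)] by (meson BseqE)
  define K where "K = A * B * B' * Q * Q * C * C'"
  have bound: "norm (Phi2_term q a b b' c c' x y (m, l)) \<le> K * (norm x ^ m * norm y ^ l)" for m l
  proof -
    have "norm (Phi2_term q a b b' c c' x y (m, l))
        = norm (qpoch a q (m + l)) * norm (qpoch b q m) * norm (qpoch b' q l)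
          * norm (inverse (qpoch q q m)) * norm (inverse (qpoch q q l))
          * norm (inverse (qpoch c q m)) * norm (inverse (qpoch c' q l)) * (norm x ^ m * norm y ^ l)"
      by (simp add: Phi2_term_def norm_mult norm_divide norm_power divide_inverse)
    also have "\<dots> \<le> K * (norm x ^ m * norm y ^ l)"
      unfolding K_def by (intro mult_mono A B B' Q C C' mult_nonneg_nonneg norm_ge_zero order_refl
          zero_le_power order_trans[OF norm_ge_zero A] order_trans[OF norm_ge_zero B]
          order_trans[OF norm_ge_zero B'] order_trans[OF norm_ge_zero Q]
          order_trans[OF norm_ge_zero C] order_trans[OF norm_ge_zero C'])
    finally show ?thesis .
  qed
  have "(\<lambda>(m, l). K * (norm x ^ m * norm y ^ l)) summable_on (UNIV :: (nat \<times> nat) set)"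
    using summable_on_cmult_right[OF summable_on_power_pairs[of "norm x" "norm y"]] assms(2,3)
    by (simp add: case_prod_unfold)
  then have "(\<lambda>p. norm (Phi2_term q a b b' c c' x y p)) summable_on UNIV"
    by (rule Infinite_Sum.abs_summable_on_comparison_test') (use bound in auto)
  then show ?thesis
    by (simp add: summable_on_iff_abs_summable_on_complex)
qed

section \<open>Contiguous relations in \<open>c\<close>\<close>

lemma Phi2_linear_combination:
  fixes \<alpha> \<xi> \<gamma> :: "nat \<Rightarrow> complex"
  assumes "finite K" and "norm q < 1" and "norm y < 1"
    and "\<And>k. k \<in> K \<Longrightarrow> norm (x * \<xi> k) < 1"
    and "\<And>k m. k \<in> K \<Longrightarrow> qpoch (\<gamma> k) q m \<noteq> 0" and "\<And>m. qpoch c' q m \<noteq> 0"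
    and coefficients: "\<And>m. 1 / qpoch c q m = (\<Sum>k\<in>K. \<alpha> k * \<xi> k ^ m / qpoch (\<gamma> k) q m)"
  shows "Phi2 q a b b' c c' x y = (\<Sum>k\<in>K. \<alpha> k * Phi2 q a b b' (\<gamma> k) c' (x * \<xi> k) y)"
proof -
  have "((\<lambda>p. \<Sum>k\<in>K. \<alpha> k * Phi2_term q a b b' (\<gamma> k) c' (x * \<xi> k) y p)
      has_sum (\<Sum>k\<in>K. \<alpha> k * Phi2 q a b b' (\<gamma> k) c' (x * \<xi> k) y)) UNIV"
    using assms by (intro has_sum_sum has_sum_cmult_right)
      (auto simp: Phi2_eq_infsum intro!: has_sum_infsum Phi2_term_summable)
  moreover have "(\<Sum>k\<in>K. \<alpha> k * Phi2_term q a b b' (\<gamma> k) c' (x * \<xi> k) y p) = Phi2_term q a b b' c c' x y p"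
    for p
  proof (cases p)
    case (Pair m l)
    define R where "R = qpoch a q (m + l) * qpoch b q m * qpoch b' q l
      / (qpoch q q m * qpoch q q l * qpoch c' q l) * y ^ l"
    have factor: "Phi2_term q a b b' c'' c' x' y (m, l) = x' ^ m / qpoch c'' q m * R" for c'' x'
      by (simp add: Phi2_term_def R_def divide_inverse inverse_mult_distrib mult_ac)
    have "(\<Sum>k\<in>K. \<alpha> k * Phi2_term q a b b' (\<gamma> k) c' (x * \<xi> k) y p)
        = x ^ m * R * (\<Sum>k\<in>K. \<alpha> k * \<xi> k ^ m / qpoch (\<gamma> k) q m)"
      unfolding Pair factor sum_distrib_left by (simp add: power_mult_distrib mult_ac)
    also have "\<dots> = Phi2_term q a b b' c c' x y p"
      unfolding Pair factor coefficients[symmetric] by simp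
    finally show ?thesis .
  qed
  ultimately show ?thesis
    by (simp add: Phi2_eq_infsum infsumI)
qed

lemma norm_mult_power_less_1:
  fixes x q :: "'a :: real_normed_div_algebra"
  assumes "norm q \<le> 1" and "norm x < 1"
  shows "norm (x * q ^ k) < 1"
proof -
  have "norm (x * q ^ k) \<le> norm x"
    using assms(1) by (simp add: norm_mult norm_power mult_left_le power_le_one)
  then show ?thesis
    using assms(2) by simp
qed

lemma Phi2_c_div_q_power_expansion:
  assumes "0 < norm q" and "norm q < 1" and "norm x < 1" and "norm y < 1" and "c \<noteq> 0"
    and "\<And>m. qpoch c q m \<noteq> 0" and "\<And>m. qpoch c' q m \<noteq> 0" and "qpoch (q / c) q n \<noteq> 0"
  shows "Phi2 q a b b' (c / q ^ n) c' x y = 1 / qpoch (q / c) q n *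
    (\<Sum>k=0..n. qbinom q n k * (- c) powi (int k - int n) * q ^ ((n + 1 - k) choose 2)
      * Phi2 q a b b' c c' (x * q ^ k) y)"
proof -
  have "1 / qpoch (c / q ^ n) q m = (\<Sum>k=0..n. qbinom q n k * (- c) powi (int k - int n)
      * q ^ ((n + 1 - k) choose 2) / qpoch (q / c) q n * (q ^ k) ^ m / qpoch c q m)" for m
    using assms by (simp add: inverse_qpoch_divide_power_expansion qbinom_eq_gauss_binom)
  then have "Phi2 q a b b' (c / q ^ n) c' x y = (\<Sum>k=0..n. (qbinom q n k * (- c) powi (int k - int n)
      * q ^ ((n + 1 - k) choose 2) / qpoch (q / c) q n) * Phi2 q a b b' c c' (x * q ^ k) y)"
    using assms by (intro Phi2_linear_combination) (auto intro: norm_mult_power_less_1)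
  then show ?thesis
    by (simp add: sum_distrib_left)
qed

lemma Phi2_c_mult_q_power_expansion:
  assumes "norm q < 1" and "norm x < 1" and "norm y < 1"
    and "\<And>k m. k \<le> n \<Longrightarrow> qpoch (c * q ^ k) q m \<noteq> 0" and "\<And>m. qpoch c' q m \<noteq> 0"
  shows "Phi2 q a b b' (c * q ^ n) c' x y =
    (\<Sum>k=0..n. qbinom q n k * c ^ k * q ^ (2 * (k choose 2)) * qpoch (c * q ^ k) q (n - k)
      * Phi2 q a b b' (c * q ^ k) c' (x * q ^ k) y)"
proof -
  have "1 / qpoch (c * q ^ n) q m = (\<Sum>k=0..n. qbinom q n k * c ^ k * q ^ (2 * (k choose 2))
      * qpoch (c * q ^ k) q (n - k) * (q ^ k) ^ m / qpoch (c * q ^ k) q m)" for m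
    using assms by (simp add: inverse_qpoch_mult_power_expansion qbinom_eq_gauss_binom)
  then show ?thesis
    using assms by (intro Phi2_linear_combination) (auto intro: norm_mult_power_less_1)
qed

theorem theorem10:
  fixes q a b b' c c' x y :: complex and n :: nat
  assumes "0 < norm q" and "norm q < 1"
    and "norm x < 1" and "norm y < 1"
  shows "((c \<noteq> 0 \<and> (\<forall>m. qpoch (c / q ^ n) q m \<noteq> 0) \<and> (\<forall>m. qpoch c q m \<noteq> 0)
            \<and> (\<forall>m. qpoch c' q m \<noteq> 0) \<and> qpoch (q / c) q n \<noteq> 0) \<longrightarrow>
          Phi2 q a b b' (c / q ^ n) c' x y =
            1 / qpoch (q / c) q n *
            (\<Sum>k=0..n. qbinom q n k * (- c) powi (int k - int n) * q ^ ((n + 1 - k) choose 2)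
                        * Phi2 q a b b' c c' (x * q ^ k) y))
       \<and> (((\<forall>k\<le>n. \<forall>m. qpoch (c * q ^ k) q m \<noteq> 0) \<and> (\<forall>m. qpoch c' q m \<noteq> 0)) \<longrightarrow>
          Phi2 q a b b' (c * q ^ n) c' x y =
            (\<Sum>k=0..n. qbinom q n k * c ^ k * q ^ (2 * (k choose 2)) * qpoch (c * q ^ k) q (n - k)
                        * Phi2 q a b b' (c * q ^ k) c' (x * q ^ k) y))"
  using Phi2_c_div_q_power_expansion[OF assms] Phi2_c_mult_q_power_expansion[OF assms(2-4)]
  by blast

end
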